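(* Let $p\ge 2$, $0<T\le\infty$. (Direct part.) Let $(a_i(t))_{i\ge0}$, $t\in[0,T)$, be a solution of $$\dot a_i=a_i\Big(\prod_{j=1}^{p}a_{i+j}-\prod_{j=1}^{p}a_{i-j}\Big),\quad i\in\mathbb Z_+,\ a_l=0\ (l<0),$$ with $a_i(t)\neq 0$ and $(a_i(t))_i\in l_\infty$, and set $b_i(t)=a_i(t)a_{i+1}(t)\cdots a_{i+p-1}(t)$ (the Miura map; $(b_i)$ then solves $\dot b_i=b_i(\sum_{j=1}^p b_{i+j}-\sum_{j=1}^p b_{i-j})$, $b_l=0$ for $l<0$). Let $S^l_k(t)=(L1(t)^k)_{l-1,0}$ and $\tilde S^l_k(t)=(L2(t)^k)_{0,l-1}$, $l=1,\dots,p$, $k\ge 0$, be the moments of the matrices $L1(t)$ built from $(a_i(t))$ and $L2(t)$ built from $(b_i(t))$. Then $$\frac{S^l_k(t)}{S^l_{l-1}(t)}=\tilde S^l_k(t),\qquad l=1,\dots,p,\ k\in\mathbb Z_+.$$ (Converse part.) Let $(b_i(t))_{i\ge0}$, $t\in[0,T)$, be a solution of $\dot b_i=b_i(\sum_{j=1}^p b_{i+j}-\sum_{j=1}^p b_{i-j})$, $b_l=0$ for $l<0$, with $b_i(t)\ne 0$, $(b_i(t))_i\in l_\infty$. Choose nonzero $a_0(0),\dots,a_{p-2}(0)\in\mathbb C$ and define $a_i(t)=a_i(0)\exp\big(\int_0^t b_{i+1}(\tau)d\tau\big)$ for $i=0,\dots,p-2$ and recursively $a_i(t)=b_{i-p+1}(t)/(a_{i-p+1}(t)\cdots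 a_{i-1}(t))$ for $i\ge p-1$. Then, with $S^l_k(t)$ the moments of $L1(t)$ built from these $a_i(t)$ and $\tilde S^l_k(t)$ those of $L2(t)$ built from $b_i(t)$, one has for all $k\in\mathbb Z_+$ $$S^1_k(t)=\tilde S^1_k(t),\qquad S^l_k(t)=a_0(0)\cdots a_{l-2}(0)\,\exp\Big(\int_0^t\big(\tilde S^l_{l+p}(\tau)-\tilde S^1_{p+1}(\tau)\big)d\tau\Big)\tilde S^l_k(t),\quad l=2,\dots,p,$$ and $S(t)=(S^1_k(t),\dots,S^p_k(t))_k$ is the moment sequence of the matrix $L1(t)$ associated with a solution of the first ($a$-)system.
   Context: For a sequence $(a_i)$, $L1$ is the infinite matrix (indices $\ge0$) with $(L1)_{i,i+p}=1$, $(L1)_{i+1,i}=a_i$ for $i\ge0$, other entries zero. For $(b_i)$, $L2$ is the infinite matrix with $(L2)_{i,i+1}=1$, $(L2)_{i+p,i}=b_i$ for $i\ge 0$, other entries zero. Matrix powers are ordinary products of these banded matrices. *)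

theory Defs
  imports "HOL-Analysis.Analysis"
begin

text \<open>Infinite matrices indexed by nat x nat, with complex entries.
  The product is the ordinary one; it is a finite sum for row-finite matrices
  (such as the banded matrices L1, L2 and their powers).\<close>

type_synonym imat = "nat \<Rightarrow> nat \<Rightarrow> complex"

definition imult :: "imat \<Rightarrow> imat \<Rightarrow> imat" where
  "imult A B = (\<lambda>i j. \<Sum>m\<in>{m. A i m \<noteq> 0}. A i m * B m j)"

definition iid :: imat where
  "iid = (\<lambda>i j. if i = j then 1 else 0)"

fun ipow :: "imat \<Rightarrow> nat \<Rightarrow> imat" where
  "ipow A 0 = iid"
| "ipow A (Suc k) = imult (ipow A k) A"

definition L1 :: "nat \<Rightarrow> (nat \<Rightarrow> complex) \<Rightarrow> imat" where
  "L1 p a = (\<lambda>i j. (if j = i + p then 1 else 0) + (if i = j + 1 then a j else 0))"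

definition L2 :: "nat \<Rightarrow> (nat \<Rightarrow> complex) \<Rightarrow> imat" where
  "L2 p b = (\<lambda>i j. (if j = i + 1 then 1 else 0) + (if i = j + p then b j else 0))"

definition S1 :: "nat \<Rightarrow> (nat \<Rightarrow> complex) \<Rightarrow> nat \<Rightarrow> nat \<Rightarrow> complex" where
  "S1 p a l k = ipow (L1 p a) k (l - 1) 0"

definition S2 :: "nat \<Rightarrow> (nat \<Rightarrow> complex) \<Rightarrow> nat \<Rightarrow> nat \<Rightarrow> complex" where
  "S2 p b l k = ipow (L2 p b) k 0 (l - 1)"

definition ext0 :: "(nat \<Rightarrow> complex) \<Rightarrow> int \<Rightarrow> complex" where
  "ext0 a i = (if i < 0 then 0 else a (nat i))"

definition tdom :: "ereal \<Rightarrow> real set" where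
  "tdom T = {t. 0 \<le> t \<and> ereal t < T}"

definition a_solution :: "nat \<Rightarrow> ereal \<Rightarrow> (nat \<Rightarrow> real \<Rightarrow> complex) \<Rightarrow> bool" where
  "a_solution p T a \<longleftrightarrow> (\<forall>i. \<forall>t\<in>tdom T.
     (a i has_vector_derivative
        a i t * ((\<Prod>j=1..p. a (i + j) t) - (\<Prod>j=1..p. ext0 (\<lambda>n. a n t) (int i - int j))))
     (at t within tdom T))"

definition b_solution :: "nat \<Rightarrow> ereal \<Rightarrow> (nat \<Rightarrow> real \<Rightarrow> complex) \<Rightarrow> bool" where
  "b_solution p T b \<longleftrightarrow> (\<forall>i. \<forall>t\<in>tdom T.
     (b i has_vector_derivative
        b i t * ((\<Sum>j=1..p. b (i + j) t) - (\<Sum>j=1..p. ext0 (\<lambda>n. b n t) (int i - int j))))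
     (at t within tdom T))"

definition nonzero_linf :: "ereal \<Rightarrow> (nat \<Rightarrow> real \<Rightarrow> complex) \<Rightarrow> bool" where
  "nonzero_linf T a \<longleftrightarrow> (\<forall>t\<in>tdom T. (\<forall>i. a i t \<noteq> 0) \<and> bounded (range (\<lambda>i. a i t)))"

end

theory Submission
  imports Defs
begin

(* With d_i = a_0 ... a_(i-1), the Miura relation b_i = a_i ... a_(i+p-1) says precisely that
   L2 = D^-1 L1^T D for D = diag(d_i). Hence (L1^k)_(l-1,0) = d_(l-1) (L2^k)_(0,l-1), and the factor
   d_(l-1) is either read off as (L1^(l-1))_(l-1,0), since (L2^(l-1))_(0,l-1) = 1, or, in the converse,
   obtained from the explicit time dependence of a_0, ..., a_(p-2) together with
   b_1 + ... + b_(l-1) = (L2^(l+p))_(0,l-1) - (L2^(p+1))_(0,0).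
   For the dynamics, both systems say that a_i has logarithmic derivative b_(i+1) - b_(i-p).
   Logarithmic derivatives add under products and subtract under quotients, which transports
   solutions along b = miura p a and along its recursive inverse a_(i+p-1) = b_i / (a_i ... a_(i+p-2)). *)

declare ipow.simps(2)[simp del]

definition row_finite :: "imat \<Rightarrow> bool" where
  "row_finite A \<longleftrightarrow> (\<forall>i. finite {j. A i j \<noteq> 0})"

lemma imult_eq_sum:
  assumes "finite {m. A i m \<noteq> 0}" "finite G" "\<And>m. m \<notin> G \<Longrightarrow> B m j = 0"
  shows "imult A B i j = (\<Sum>m\<in>G. A i m * B m j)"
proof -
  let ?U = "{m. A i m \<noteq> 0} \<union> G"
  have "imult A B i j = (\<Sum>m\<in>?U. A i m * B m j)"
    unfolding imult_def by (rule sum.mono_neutral_left) (use assms in auto)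
  also have "\<dots> = (\<Sum>m\<in>G. A i m * B m j)"
    by (rule sum.mono_neutral_right) (use assms in auto)
  finally show ?thesis .
qed

lemma row_finite_imult:
  assumes "row_finite A" "row_finite B"
  shows "row_finite (imult A B)"
  unfolding row_finite_def
proof
  fix i
  have "imult A B i j = 0" if "j \<notin> (\<Union>m\<in>{m. A i m \<noteq> 0}. {j. B m j \<noteq> 0})" for j
    using that unfolding imult_def by (auto intro!: sum.neutral)
  then have "{j. imult A B i j \<noteq> 0} \<subseteq> (\<Union>m\<in>{m. A i m \<noteq> 0}. {j. B m j \<noteq> 0})"
    by blast
  then show "finite {j. imult A B i j \<noteq> 0}"
    using assms unfolding row_finite_def by (auto intro: finite_subset)
qed

lemma row_finite_ipow: "row_finite A \<Longrightarrow> row_finite (ipow A k)"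
proof (induction k)
  case 0
  have "{j. iid i j \<noteq> 0} = {i}" for i by (auto simp: iid_def)
  then show ?case by (simp add: row_finite_def)
next
  case (Suc k)
  then show ?case by (simp add: ipow.simps(2) row_finite_imult)
qed

lemma row_finite_L1: "row_finite (L1 p a)"
proof -
  have "{j. L1 p a i j \<noteq> 0} \<subseteq> {i + p, i - 1}" for i by (auto simp: L1_def)
  then show ?thesis unfolding row_finite_def by (meson finite.emptyI finite.insertI finite_subset)
qed

lemma row_finite_L2: "row_finite (L2 p b)"
proof -
  have "{j. L2 p b i j \<noteq> 0} \<subseteq> {i + 1, i - p}" for i by (auto simp: L2_def)
  then show ?thesis unfolding row_finite_def by (meson finite.emptyI finite.insertI finite_subset)
qed

lemma ipow_L1_Suc:
  "ipow (L1 p a) (Suc k) i j =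
     ipow (L1 p a) k i (Suc j) * a j + (if p \<le> j then ipow (L1 p a) k i (j - p) else 0)"
proof -
  have "ipow (L1 p a) (Suc k) i j = (\<Sum>m\<in>{Suc j, j - p}. ipow (L1 p a) k i m * L1 p a m j)"
    unfolding ipow.simps(2)
  proof (rule imult_eq_sum)
    show "finite {m. ipow (L1 p a) k i m \<noteq> 0}"
      using row_finite_ipow[OF row_finite_L1] by (simp add: row_finite_def)
  qed (auto simp: L1_def)
  moreover have "Suc j \<noteq> j - p" by simp
  moreover have "L1 p a (Suc j) j = a j" "L1 p a (j - p) j = (if p \<le> j then 1 else 0)"
    by (auto simp: L1_def)
  ultimately show ?thesis by simp
qed

lemma ipow_L2_Suc:
  "ipow (L2 p b) (Suc k) i j =
     (if 0 < j then ipow (L2 p b) k i (j - 1) else 0) + ipow (L2 p b) k i (j + p) * b j"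
proof -
  have "ipow (L2 p b) (Suc k) i j = (\<Sum>m\<in>{j - 1, j + p}. ipow (L2 p b) k i m * L2 p b m j)"
    unfolding ipow.simps(2)
  proof (rule imult_eq_sum)
    show "finite {m. ipow (L2 p b) k i m \<noteq> 0}"
      using row_finite_ipow[OF row_finite_L2] by (simp add: row_finite_def)
  qed (auto simp: L2_def)
  then show ?thesis by (cases "j = 0"; cases "p = 0") (auto simp: L2_def)
qed

(* The expansion of L1^(k+1) as L1 * L1^k, obtained by induction instead of associativity of imult. *)
lemma ipow_L1_Suc_left:
  "ipow (L1 p a) (Suc k) i j =
     ipow (L1 p a) k (i + p) j + (if 0 < i then a (i - 1) * ipow (L1 p a) k (i - 1) j else 0)"
proof (induction k arbitrary: j)
  case 0
  show ?case by (auto simp: ipow_L1_Suc iid_def)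
next
  case (Suc k)
  let ?P = "ipow (L1 p a)"
  have "?P (Suc (Suc k)) i j =
     ?P (Suc k) i (Suc j) * a j + (if p \<le> j then ?P (Suc k) i (j - p) else 0)"
    by (rule ipow_L1_Suc)
  also have "\<dots> = (?P k (i + p) (Suc j) + (if 0 < i then a (i - 1) * ?P k (i - 1) (Suc j) else 0)) * a j
     + (if p \<le> j then ?P k (i + p) (j - p)
          + (if 0 < i then a (i - 1) * ?P k (i - 1) (j - p) else 0) else 0)"
    by (simp only: Suc)
  also have "\<dots> = (?P k (i + p) (Suc j) * a j + (if p \<le> j then ?P k (i + p) (j - p) else 0))
     + (if 0 < i then a (i - 1) * (?P k (i - 1) (Suc j) * a j
          + (if p \<le> j then ?P k (i - 1) (j - p) else 0)) else 0)"
    by (auto simp: algebra_simps)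
  also have "\<dots> = ?P (Suc k) (i + p) j + (if 0 < i then a (i - 1) * ?P (Suc k) (i - 1) j else 0)"
    by (simp only: ipow_L1_Suc)
  finally show ?case .
qed

definition miura :: "nat \<Rightarrow> (nat \<Rightarrow> 'a::comm_monoid_mult) \<Rightarrow> nat \<Rightarrow> 'a" where
  "miura p a i = (\<Prod>q<p. a (i + q))"

lemma prod_lessThan_mult_miura: "(\<Prod>m<j. a m) * miura p a j = (\<Prod>m<j + p. a m)"
proof (induction p)
  case 0
  then show ?case by (simp add: miura_def)
next
  case (Suc p)
  then show ?case by (simp add: miura_def mult.assoc[symmetric])
qed

lemma prod_mult_ipow_L2_miura:
  "(\<Prod>m<j. a m) * ipow (L2 p (miura p a)) k i j = (\<Prod>m<i. a m) * ipow (L1 p a) k j i"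
proof (induction k arbitrary: i j)
  case 0
  then show ?case by (simp add: iid_def)
next
  case (Suc k)
  have d: "(\<Prod>m<j. a m) = a (j - 1) * (\<Prod>m<j - 1. a m)" if "0 < j"
    using that by (cases j) auto
  have "(\<Prod>m<j. a m) * ipow (L2 p (miura p a)) (Suc k) i j =
     (if 0 < j then a (j - 1) * ((\<Prod>m<j - 1. a m) * ipow (L2 p (miura p a)) k i (j - 1)) else 0)
      + ((\<Prod>m<j. a m) * miura p a j) * ipow (L2 p (miura p a)) k i (j + p)"
    by (simp add: ipow_L2_Suc d algebra_simps)
  also have "\<dots> = (if 0 < j then a (j - 1) * ((\<Prod>m<i. a m) * ipow (L1 p a) k (j - 1) i) else 0)
      + (\<Prod>m<i. a m) * ipow (L1 p a) k (j + p) i"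
    by (simp only: prod_lessThan_mult_miura Suc)
  also have "\<dots> = (\<Prod>m<i. a m) * ipow (L1 p a) (Suc k) j i"
    by (simp add: ipow_L1_Suc_left algebra_simps)
  finally show ?case .
qed

lemma ipow_L2_row0_above: "k < j \<Longrightarrow> ipow (L2 p b) k 0 j = 0"
proof (induction k arbitrary: j)
  case 0
  then show ?case by (simp add: iid_def)
next
  case (Suc k)
  then show ?case by (simp add: ipow_L2_Suc)
qed

lemma ipow_L2_row0_diag: "ipow (L2 p b) k 0 k = 1"
proof (induction k)
  case 0
  then show ?case by (simp add: iid_def)
next
  case (Suc k)
  then show ?case by (simp add: ipow_L2_Suc ipow_L2_row0_above)
qed

lemma ipow_L2_row0_le:
  "k \<le> p \<Longrightarrow> ipow (L2 p b) k 0 j = (if j = k then 1 else 0)"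
proof (induction k arbitrary: j)
  case 0
  then show ?case by (simp add: iid_def)
next
  case (Suc k)
  then show ?case by (auto simp: ipow_L2_Suc)
qed

lemma ipow_L2_row0_add_Suc:
  "r < p \<Longrightarrow> ipow (L2 p b) (p + Suc r) 0 j =
     (if j = p + Suc r then 1 else 0) + (if j = r then (\<Sum>i<Suc r. b i) else 0)"
proof (induction r arbitrary: j)
  case 0
  then show ?case by (auto simp: ipow_L2_Suc ipow_L2_row0_le)
next
  case (Suc r)
  have "ipow (L2 p b) (p + Suc (Suc r)) 0 j =
     (if 0 < j then ipow (L2 p b) (p + Suc r) 0 (j - 1) else 0) + ipow (L2 p b) (p + Suc r) 0 (j + p) * b j"
    using ipow_L2_Suc[where k="p + Suc r"] by simp
  also have "\<dots> = (if j = p + Suc (Suc r) then 1 else 0) + (if j = Suc r then (\<Sum>i<Suc (Suc r). b i) else 0)"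
    using Suc by auto
  finally show ?case .
qed

lemma S1_eq_prod_mult_S2: "S1 p a l k = (\<Prod>m<l - 1. a m) * S2 p (miura p a) l k"
  using prod_mult_ipow_L2_miura[where j="l - 1" and i=0] by (simp add: S1_def S2_def)

lemma S2_diag: "S2 p b l (l - 1) = 1"
  by (simp add: S2_def ipow_L2_row0_diag)

lemma S2_add_p:
  assumes "1 \<le> l" "l \<le> p"
  shows "S2 p b l (l + p) = (\<Sum>i<l. b i)"
proof -
  obtain r where "l = Suc r" "r < p" using assms by (cases l) auto
  then show ?thesis using ipow_L2_row0_add_Suc[where r=r and j=r] by (simp add: S2_def add.commute)
qed

lemma S1_div_S1_eq_S2_miura:
  assumes "(\<Prod>m<l - 1. a m) \<noteq> 0"
  shows "S1 p a l k / S1 p a l (l - 1) = S2 p (miura p a) l k"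
  using assms unfolding S1_eq_prod_mult_S2 S2_diag by simp

definition has_logderiv :: "(real \<Rightarrow> 'a::real_normed_field) \<Rightarrow> 'a \<Rightarrow> real set \<Rightarrow> real \<Rightarrow> bool" where
  "has_logderiv f g S t \<longleftrightarrow> (f has_vector_derivative f t * g) (at t within S)"

lemma has_logderiv_mult:
  assumes "has_logderiv f g S t" "has_logderiv h k S t"
  shows "has_logderiv (\<lambda>x. f x * h x) (g + k) S t"
  using has_vector_derivative_mult[OF assms[unfolded has_logderiv_def]] unfolding has_logderiv_def
  by (rule has_vector_derivative_eq_rhs) (simp add: algebra_simps)

lemma has_logderiv_prod:
  assumes "finite I" "\<And>i. i \<in> I \<Longrightarrow> has_logderiv (f i) (g i) S t"
  shows "has_logderiv (\<lambda>x. \<Prod>i\<in>I. f i x) (\<Sum>i\<in>I. g i) S t"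
  using assms
proof (induction I rule: finite_induct)
  case empty
  then show ?case by (simp add: has_logderiv_def)
next
  case (insert i I)
  then have "has_logderiv (\<lambda>x. f i x * (\<Prod>i\<in>I. f i x)) (g i + (\<Sum>i\<in>I. g i)) S t"
    by (intro has_logderiv_mult) auto
  then show ?case using insert by simp
qed

lemma has_logderiv_inverse:
  assumes "has_logderiv f g S t" "f t \<noteq> 0"
  shows "has_logderiv (\<lambda>x. inverse (f x)) (- g) S t"
proof -
  have "((inverse \<circ> f) has_vector_derivative (f t * g) * (- (inverse (f t) ^ Suc (Suc 0)))) (at t within S)"
    using assms(1) unfolding has_logderiv_def
    by (rule field_vector_diff_chain_within) (rule DERIV_inverse[OF assms(2)])
  then show ?thesis unfolding has_logderiv_def o_def
    by (rule has_vector_derivative_eq_rhs) (use assms(2) in \<open>simp add: field_simps power2_eq_square\<close>)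
qed

lemma has_logderiv_divide:
  assumes "has_logderiv f g S t" "has_logderiv h k S t" "h t \<noteq> 0"
  shows "has_logderiv (\<lambda>x. f x / h x) (g - k) S t"
  using has_logderiv_mult[OF assms(1) has_logderiv_inverse[OF assms(2,3)]]
  by (simp add: divide_inverse)

lemma has_logderiv_exp:
  fixes F :: "real \<Rightarrow> 'a::{real_normed_field,banach}"
  assumes "(F has_vector_derivative c) (at t within S)"
  shows "has_logderiv (\<lambda>x. z * exp (F x)) c S t"
proof -
  have "((exp \<circ> F) has_vector_derivative c * exp (F t)) (at t within S)"
    using assms by (rule field_vector_diff_chain_within) (rule has_field_derivative_at_within[OF DERIV_exp])
  then have "((\<lambda>x. z * (exp \<circ> F) x) has_vector_derivative z * (c * exp (F t))) (at t within S)"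
    by (rule has_vector_derivative_mult_right)
  then show ?thesis unfolding has_logderiv_def o_def
    by (rule has_vector_derivative_eq_rhs) (simp add: algebra_simps)
qed

lemma has_logderiv_transform:
  assumes "t \<in> S" "\<And>x. x \<in> S \<Longrightarrow> f x = h x" "has_logderiv h g S t"
  shows "has_logderiv f g S t"
  using assms unfolding has_logderiv_def by (metis has_vector_derivative_transform)

lemma atLeastAtMost_subset_tdom: "t \<in> tdom T \<Longrightarrow> {0..t} \<subseteq> tdom T"
  unfolding tdom_def by auto (meson ereal_less_eq(3) le_less_trans)

lemma has_vector_derivative_integral_tdom:
  fixes f :: "real \<Rightarrow> 'a::banach"
  assumes "continuous_on (tdom T) f" "t \<in> tdom T"
  shows "((\<lambda>u. integral {0..u} f) has_vector_derivative f t) (at t within tdom T)"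
proof -
  from assms(2) have "0 \<le> t" "ereal t < T" by (auto simp: tdom_def)
  then obtain c where c: "t < c" "ereal c < T"
    by (metis ereal_dense2 ereal_less(2) less_ereal.simps(1))
  then have "c \<in> tdom T" using \<open>0 \<le> t\<close> by (simp add: tdom_def)
  then have "continuous_on {0..c} f"
    using assms(1) atLeastAtMost_subset_tdom continuous_on_subset by blast
  from integral_has_vector_derivative[OF this, of t]
  have "((\<lambda>u. integral {0..u} f) has_vector_derivative f t) (at t within {0..c})"
    using c \<open>0 \<le> t\<close> by simp
  moreover have "at t within tdom T = at t within {0..c}"
    by (rule at_within_nhd[where S="{..<c}"])
      (use c in \<open>auto simp: tdom_def intro: le_less_trans[of _ "ereal c"]\<close>)
  ultimately show ?thesis by simp
qed

lemma prod_atLeast1_atMost_reflect: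
  fixes f :: "nat \<Rightarrow> 'a::comm_monoid_mult"
  shows "(\<Prod>j=1..n. f (m + n - j)) = (\<Prod>q<n. f (m + q))"
proof -
  have "(\<Prod>j=1..n. f (m + n - j)) = (\<Prod>k<n. f (m + (n - Suc k)))"
    by (simp add: prod.atLeast1_atMost_eq)
  also have "\<dots> = (\<Prod>q<n. f (m + q))"
    by (rule prod.nat_diff_reindex)
  finally show ?thesis .
qed

lemma prod_upper_eq_miura: "(\<Prod>j=1..p. a (i + j)) = miura p a (Suc i)"
  by (simp add: miura_def prod.atLeast1_atMost_eq)

lemma prod_ext0_lower_eq_miura:
  assumes "1 \<le> p"
  shows "(\<Prod>j=1..p. ext0 a (int i - int j)) = ext0 (miura p a) (int i - int p)"
proof (cases "p \<le> i")
  case True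
  have "(\<Prod>j=1..p. ext0 a (int i - int j)) = (\<Prod>j=1..p. a (i - p + p - j))"
    by (rule prod.cong) (use True in \<open>auto simp: ext0_def nat_diff_distrib\<close>)
  also have "\<dots> = miura p a (i - p)"
    unfolding prod_atLeast1_atMost_reflect miura_def ..
  finally show ?thesis using True by (simp add: ext0_def nat_diff_distrib)
next
  case False
  have "(\<Prod>j=1..p. ext0 a (int i - int j)) = 0"
    by (rule prod_zero) (use False assms in \<open>auto simp: ext0_def intro!: bexI[where x=p]\<close>)
  then show ?thesis using False by (simp add: ext0_def)
qed

(* With b = miura p a, the a-system reads a_i' = a_i (b_(i+1) - b_(i-p)). *)
definition a_logderiv :: "nat \<Rightarrow> (nat \<Rightarrow> complex) \<Rightarrow> nat \<Rightarrow> complex" where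
  "a_logderiv p b i = b (Suc i) - ext0 b (int i - int p)"

lemma sum_a_logderiv:
  "(\<Sum>q<p. a_logderiv p b (i + q)) = (\<Sum>j=1..p. b (i + j)) - (\<Sum>j=1..p. ext0 b (int i - int j))"
proof -
  have "(\<Sum>j=1..p. ext0 b (int i - int j)) = (\<Sum>k<p. ext0 b (int (i + (p - Suc k)) - int p))"
    by (simp add: sum.atLeast1_atMost_eq of_nat_diff algebra_simps)
  also have "\<dots> = (\<Sum>q<p. ext0 b (int (i + q) - int p))"
    by (rule sum.nat_diff_reindex)
  finally show ?thesis
    by (simp add: a_logderiv_def sum_subtractf sum.atLeast1_atMost_eq)
qed

lemma a_solution_iff_has_logderiv:
  assumes "1 \<le> p" "\<And>i t. t \<in> tdom T \<Longrightarrow> b i t = miura p (\<lambda>n. a n t) i"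
  shows "a_solution p T a \<longleftrightarrow>
    (\<forall>i. \<forall>t\<in>tdom T. has_logderiv (a i) (a_logderiv p (\<lambda>n. b n t) i) (tdom T) t)"
proof -
  have "(\<Prod>j=1..p. a (i + j) t) - (\<Prod>j=1..p. ext0 (\<lambda>n. a n t) (int i - int j))
      = a_logderiv p (\<lambda>n. b n t) i" if "t \<in> tdom T" for i t
  proof -
    have "(\<lambda>n. b n t) = miura p (\<lambda>n. a n t)" using assms(2) that by blast
    then show ?thesis
      using prod_upper_eq_miura[where a="\<lambda>n. a n t"]
        prod_ext0_lower_eq_miura[OF assms(1), where a="\<lambda>n. a n t"]
      by (simp add: a_logderiv_def)
  qed
  then show ?thesis unfolding a_solution_def has_logderiv_def by simp
qed

lemma b_solution_iff_has_logderiv: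
  "b_solution p T b \<longleftrightarrow>
    (\<forall>i. \<forall>t\<in>tdom T. has_logderiv (b i) (\<Sum>q<p. a_logderiv p (\<lambda>n. b n t) (i + q)) (tdom T) t)"
  by (simp add: b_solution_def has_logderiv_def sum_a_logderiv)

lemma b_solution_miura:
  assumes "1 \<le> p" "a_solution p T a" "\<And>i t. t \<in> tdom T \<Longrightarrow> b i t = miura p (\<lambda>n. a n t) i"
  shows "b_solution p T b"
  unfolding b_solution_iff_has_logderiv
proof (intro allI ballI)
  fix i t assume t: "t \<in> tdom T"
  have "has_logderiv (\<lambda>x. \<Prod>q<p. a (i + q) x) (\<Sum>q<p. a_logderiv p (\<lambda>n. b n t) (i + q)) (tdom T) t"
    using assms t by (intro has_logderiv_prod) (auto simp: a_solution_iff_has_logderiv)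
  then show "has_logderiv (b i) (\<Sum>q<p. a_logderiv p (\<lambda>n. b n t) (i + q)) (tdom T) t"
    by (rule has_logderiv_transform[OF t, rotated]) (simp add: assms(3) miura_def)
qed

locale inverse_miura =
  fixes p :: nat and T :: ereal and b a :: "nat \<Rightarrow> real \<Rightarrow> complex" and a0 :: "nat \<Rightarrow> complex"
  assumes p_ge_2: "2 \<le> p"
    and b_solves: "b_solution p T b"
    and b_nonzero: "\<And>i t. t \<in> tdom T \<Longrightarrow> b i t \<noteq> 0"
    and a0_nonzero: "\<And>i. i \<le> p - 2 \<Longrightarrow> a0 i \<noteq> 0"
    and a_initial: "\<And>i t. i \<le> p - 2 \<Longrightarrow> t \<in> tdom T \<Longrightarrow>
      a i t = a0 i * exp (integral {0..t} (\<lambda>\<tau>. b (i + 1) \<tau>))"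
    and a_recursive: "\<And>i t. p - 1 \<le> i \<Longrightarrow> t \<in> tdom T \<Longrightarrow>
      a i t = b (i + 1 - p) t / (\<Prod>j=1..p - 1. a (i - j) t)"
begin

lemma a_eq_b_div_prod:
  assumes "t \<in> tdom T"
  shows "a (m + (p - 1)) t = b m t / (\<Prod>q<p - 1. a (m + q) t)"
proof -
  have "a (m + (p - 1)) t = b (m + (p - 1) + 1 - p) t / (\<Prod>j=1..p - 1. a (m + (p - 1) - j) t)"
    by (rule a_recursive) (use assms in auto)
  also have "m + (p - 1) + 1 - p = m" using p_ge_2 by simp
  also have "(\<Prod>j=1..p - 1. a (m + (p - 1) - j) t) = (\<Prod>q<p - 1. a (m + q) t)"
    by (rule prod_atLeast1_atMost_reflect)
  finally show ?thesis .
qed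

lemma a_nonzero:
  assumes "t \<in> tdom T"
  shows "a i t \<noteq> 0"
proof (induction i rule: less_induct)
  case (less i)
  show ?case
  proof (cases "i \<le> p - 2")
    case True
    then show ?thesis using a_initial[OF True assms] a0_nonzero by simp
  next
    case False
    define m where "m = i - (p - 1)"
    then have i: "i = m + (p - 1)" using False by simp
    have "(\<Prod>q<p - 1. a (m + q) t) \<noteq> 0"
      using less i p_ge_2 by (simp add: prod_zero_iff)
    then show ?thesis using a_eq_b_div_prod[OF assms, of m] b_nonzero[OF assms] i by simp
  qed
qed

lemma b_eq_miura:
  assumes "t \<in> tdom T"
  shows "b i t = miura p (\<lambda>n. a n t) i"
proof -
  have "p = Suc (p - 1)" using p_ge_2 by simp
  then have "miura p (\<lambda>n. a n t) i = (\<Prod>q<p - 1. a (i + q) t) * a (i + (p - 1)) t"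
    unfolding miura_def by (metis prod.lessThan_Suc)
  also have "\<dots> = b i t"
    using a_eq_b_div_prod[OF assms, of i] a_nonzero[OF assms] by (simp add: prod_zero_iff)
  finally show ?thesis ..
qed

lemma b_continuous: "continuous_on (tdom T) (b i)"
  by (rule continuous_on_vector_derivative) (use b_solves in \<open>auto simp: b_solution_def\<close>)

lemma has_logderiv_a:
  assumes "t \<in> tdom T"
  shows "has_logderiv (a i) (a_logderiv p (\<lambda>n. b n t) i) (tdom T) t"
proof (induction i rule: less_induct)
  case (less i)
  let ?c = "a_logderiv p (\<lambda>n. b n t)"
  show ?case
  proof (cases "i \<le> p - 2")
    case True
    have "has_logderiv (\<lambda>x. a0 i * exp (integral {0..x} (b (Suc i)))) (b (Suc i) t) (tdom T) t"
      by (rule has_logderiv_exp, rule has_vector_derivative_integral_tdom[OF b_continuous assms])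
    then have "has_logderiv (a i) (b (Suc i) t) (tdom T) t"
      by (rule has_logderiv_transform[OF assms, rotated]) (simp add: a_initial[OF True])
    moreover have "?c i = b (Suc i) t"
      using True p_ge_2 by (simp add: a_logderiv_def ext0_def)
    ultimately show ?thesis by simp
  next
    case False
    define m where "m = i - (p - 1)"
    then have i: "i = m + (p - 1)" using False by simp
    have "has_logderiv (b m) (\<Sum>q<p. ?c (m + q)) (tdom T) t"
      using b_solves assms by (simp add: b_solution_iff_has_logderiv)
    moreover have "has_logderiv (\<lambda>x. \<Prod>q<p - 1. a (m + q) x) (\<Sum>q<p - 1. ?c (m + q)) (tdom T) t"
      by (rule has_logderiv_prod) (use less i p_ge_2 in auto)
    ultimately have "has_logderiv (\<lambda>x. b m x / (\<Prod>q<p - 1. a (m + q) x))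
        ((\<Sum>q<p. ?c (m + q)) - (\<Sum>q<p - 1. ?c (m + q))) (tdom T) t"
      using a_nonzero[OF assms] by (intro has_logderiv_divide) (auto simp: prod_zero_iff)
    moreover have "(\<Sum>q<p. ?c (m + q)) - (\<Sum>q<p - 1. ?c (m + q)) = ?c i"
    proof -
      obtain r where "p = Suc r" using p_ge_2 by (cases p) auto
      then show ?thesis using i by simp
    qed
    ultimately have "has_logderiv (\<lambda>x. b m x / (\<Prod>q<p - 1. a (m + q) x)) (?c i) (tdom T) t"
      by simp
    then show ?thesis
      by (rule has_logderiv_transform[OF assms, rotated]) (metis i a_eq_b_div_prod)
  qed
qed

lemma a_solves: "a_solution p T a"
  using a_solution_iff_has_logderiv[of p T b a] b_eq_miura has_logderiv_a p_ge_2 by simp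

lemma prod_a_eq_exp_integral:
  assumes "t \<in> tdom T" "l \<in> {1..p}"
  shows "(\<Prod>m<l - 1. a m t) = (\<Prod>m<l - 1. a0 m) *
    exp (integral {0..t} (\<lambda>\<tau>. S2 p (\<lambda>i. b i \<tau>) l (l + p) - S2 p (\<lambda>i. b i \<tau>) 1 (p + 1)))"
proof -
  obtain r where l: "l = Suc r" using assms(2) by (cases l) auto
  have "S2 p (\<lambda>i. b i \<tau>) l (l + p) - S2 p (\<lambda>i. b i \<tau>) 1 (p + 1) = (\<Sum>m<l - 1. b (Suc m) \<tau>)" for \<tau>
  proof -
    have "S2 p (\<lambda>i. b i \<tau>) l (l + p) = (\<Sum>i<Suc r. b i \<tau>)"
      using S2_add_p[of l p] assms(2) l by simp
    moreover have "S2 p (\<lambda>i. b i \<tau>) 1 (p + 1) = b 0 \<tau>"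
      using S2_add_p[of 1 p] p_ge_2 by (simp add: add.commute)
    ultimately show ?thesis
      unfolding sum.lessThan_Suc_shift l by simp
  qed
  moreover have "integral {0..t} (\<lambda>\<tau>. \<Sum>m<l - 1. b (Suc m) \<tau>) = (\<Sum>m<l - 1. integral {0..t} (b (Suc m)))"
    using continuous_on_subset[OF b_continuous atLeastAtMost_subset_tdom[OF assms(1)]]
    by (intro integral_sum) (auto intro: integrable_continuous_interval)
  moreover have "(\<Prod>m<l - 1. a m t) = (\<Prod>m<l - 1. a0 m * exp (integral {0..t} (b (Suc m))))"
    by (rule prod.cong) (use a_initial assms in auto)
  ultimately show ?thesis by (simp add: exp_sum prod.distrib)
qed

lemma S1_eq_exp_integral_mult_S2:
  assumes "t \<in> tdom T" "l \<in> {1..p}"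
  shows "S1 p (\<lambda>i. a i t) l k = (\<Prod>i<l - 1. a0 i) *
    exp (integral {0..t} (\<lambda>\<tau>. S2 p (\<lambda>i. b i \<tau>) l (l + p) - S2 p (\<lambda>i. b i \<tau>) 1 (p + 1))) *
    S2 p (\<lambda>i. b i t) l k"
proof -
  have "(\<lambda>i. b i t) = miura p (\<lambda>i. a i t)"
    using b_eq_miura[OF assms(1)] by blast
  then show ?thesis
    using prod_a_eq_exp_integral[OF assms] by (simp add: S1_eq_prod_mult_S2)
qed

end

theorem theorem3:
  fixes p :: nat and T :: ereal
  assumes "p \<ge> 2" and "T > 0"
  shows
   "(\<forall>a b. a_solution p T a \<and> nonzero_linf T a \<and>
        (\<forall>i t. b i t = (\<Prod>j<p. a (i + j) t)) \<longrightarrow>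
        b_solution p T b \<and>
        (\<forall>t\<in>tdom T. \<forall>l\<in>{1..p}. \<forall>k.
           S1 p (\<lambda>i. a i t) l k / S1 p (\<lambda>i. a i t) l (l - 1) = S2 p (\<lambda>i. b i t) l k))
    \<and>
    (\<forall>b a0 a. b_solution p T b \<and> nonzero_linf T b \<and>
        (\<forall>i\<le>p - 2. a0 i \<noteq> 0) \<and>
        (\<forall>i\<le>p - 2. \<forall>t\<in>tdom T. a i t = a0 i * exp (integral {0..t} (\<lambda>\<tau>. b (i + 1) \<tau>))) \<and>
        (\<forall>i\<ge>p - 1. \<forall>t\<in>tdom T.
            a i t = b (i + 1 - p) t / (\<Prod>j=1..p - 1. a (i - j) t)) \<longrightarrow>
        (\<forall>t\<in>tdom T. \<forall>k.
           S1 p (\<lambda>i. a i t) 1 k = S2 p (\<lambda>i. b i t) 1 k \<and>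
           (\<forall>l\<in>{2..p}. S1 p (\<lambda>i. a i t) l k =
              (\<Prod>i<l - 1. a0 i) *
              exp (integral {0..t} (\<lambda>\<tau>. S2 p (\<lambda>i. b i \<tau>) l (l + p) - S2 p (\<lambda>i. b i \<tau>) 1 (p + 1))) *
              S2 p (\<lambda>i. b i t) l k)) \<and>
        a_solution p T a)"
proof ((rule conjI; intro allI impI; elim conjE), goal_cases)
  case (1 a b)
  have p: "1 \<le> p" using assms(1) by simp
  have b_miura: "(\<lambda>i. b i t) = miura p (\<lambda>i. a i t)" for t
    using 1(3) by (simp add: miura_def fun_eq_iff)
  have "b_solution p T b"
    by (rule b_solution_miura[OF p 1(1)]) (simp add: b_miura[symmetric])
  moreover have "S1 p (\<lambda>i. a i t) l k / S1 p (\<lambda>i. a i t) l (l - 1) = S2 p (\<lambda>i. b i t) l k"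
    if "t \<in> tdom T" for t l k
  proof -
    have "(\<Prod>m<l - 1. a m t) \<noteq> 0"
      using 1(2) that by (simp add: nonzero_linf_def prod_zero_iff)
    then show ?thesis
      unfolding b_miura by (rule S1_div_S1_eq_S2_miura)
  qed
  ultimately show ?case by simp
next
  case (2 b a0 a)
  interpret inverse_miura p T b a a0
    by (rule inverse_miura.intro[OF assms(1) 2(1) _ 2(3)[rule_format] 2(4)[rule_format] 2(5)[rule_format]])
      (use 2(2) in \<open>simp add: nonzero_linf_def\<close>)
  have "S1 p (\<lambda>i. a i t) 1 k = S2 p (\<lambda>i. b i t) 1 k" if "t \<in> tdom T" for t k
    using S1_eq_exp_integral_mult_S2[OF that, of 1 k] assms(1) by simp
  then show ?case
    using a_solves S1_eq_exp_integral_mult_S2 by simp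
qed

end
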